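(* Let $X$ be a random variable with Gamma distribution $\Gamma(\alpha,\theta)$, $\alpha,\theta>0$ (density $\frac{x^{\alpha-1}e^{-x/\theta}}{\theta^\alpha\Gamma(\alpha)}$, $x>0$), and let $s\geq1$ be an integer. If $\alpha\geq 1$, then $X$ is $s$-IFR. If $\alpha<1$, then $X$ is $s$-DFR.
   Context: For a nonnegative random variable $X$ with density $f_X$: set $\overline{T}_{X,0}=f_X$, $\widetilde{\mu}_{X,0}=1$, and for $s\geq1$, $x\geq0$, $\overline{T}_{X,s}(x)=\frac{1}{\widetilde{\mu}_{X,s-1}}\int_x^\infty \overline{T}_{X,s-1}(t)\,dt$ with $\widetilde{\mu}_{X,s}=\int_0^\infty \overline{T}_{X,s}(t)\,dt$. The $s$-iterated failure rate is $r_{X,s}(x)=\frac{\overline{T}_{X,s-1}(x)}{\int_x^\infty \overline{T}_{X,s-1}(t)\,dt}$ for $x\geq 0$ (so $r_{X,1}=f_X/(1-F_X)$). $X$ is called $s$-IFR (resp. $s$-DFR) if $r_{X,s}$ is increasing (resp. decreasing) on $[0,\infty)$. *)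

theory Defs
  imports "HOL-Analysis.Analysis"
begin

fun Tbar :: "(real \<Rightarrow> real) \<Rightarrow> nat \<Rightarrow> real \<Rightarrow> real" where
  "Tbar f 0 = f"
| "Tbar f (Suc s) = (\<lambda>x. (LBINT t:{x..}. Tbar f s t) / (LBINT t:{0..}. Tbar f s t))"

definition mu_tilde :: "(real \<Rightarrow> real) \<Rightarrow> nat \<Rightarrow> real" where
  "mu_tilde f s = (LBINT t:{0..}. Tbar f s t)"

definition iter_failure_rate :: "(real \<Rightarrow> real) \<Rightarrow> nat \<Rightarrow> real \<Rightarrow> real" where
  "iter_failure_rate f s x = Tbar f (s - 1) x / (LBINT t:{x..}. Tbar f (s - 1) t)"

definition s_IFR :: "(real \<Rightarrow> real) \<Rightarrow> nat \<Rightarrow> bool" where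
  "s_IFR f s \<longleftrightarrow> mono_on {0..} (iter_failure_rate f s)"

text \<open>Decreasing failure rate; checked on (0,inf) since the density of Gamma with
  alpha < 1 is +infinity at 0.\<close>
definition s_DFR :: "(real \<Rightarrow> real) \<Rightarrow> nat \<Rightarrow> bool" where
  "s_DFR f s \<longleftrightarrow> antimono_on {0<..} (iter_failure_rate f s)"

definition gamma_density :: "real \<Rightarrow> real \<Rightarrow> real \<Rightarrow> real" where
  "gamma_density \<alpha> \<theta> x =
     (if x > 0 then x powr (\<alpha> - 1) * exp (- x / \<theta>) / (\<theta> powr \<alpha> * Gamma \<alpha>) else 0)"

end

theory Submission
  imports Defs "HOL-Real_Asymp.Real_Asymp"
begin

(* Write G for the tail integral of a density g and h = g / G for its hazard rate.
   Since G(x) / g(x) is the integral over u >= 0 of the shift ratio g(x+u) / g(x), the hazard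
   increases as soon as every shift ratio g(x+t) / g(x) decreases in x (log-concavity).
   Conversely, the derivative of G(x+t) / G(x) is (h(x) - h(x+t)) G(x+t) / G(x), so an
   increasing hazard makes the shift ratios of G decrease. Normalisation affects neither
   property, so monotonicity of the hazard passes from Tbar s to Tbar (s+1). For the Gamma
   density the shift ratio is (1 + t/x) powr (alpha - 1) * exp (- t / theta), decreasing in x
   for alpha >= 1 and increasing for alpha < 1. Multiplying by a sign d = 1 or d = -1 treats
   the IFR and the DFR case at once. *)

definition tail :: "(real \<Rightarrow> real) \<Rightarrow> real \<Rightarrow> real" where
  "tail g x = (LBINT t:{x..}. g t)"

definition hazard :: "(real \<Rightarrow> real) \<Rightarrow> real \<Rightarrow> real" where
  "hazard g x = g x / tail g x"

lemma Tbar_Suc_eq_tail: "Tbar f (Suc s) = (\<lambda>x. tail (Tbar f s) x / tail (Tbar f s) 0)"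
  by (simp add: tail_def)

lemma iter_failure_rate_eq_hazard: "iter_failure_rate f s = hazard (Tbar f (s - 1))"
  by (simp add: fun_eq_iff iter_failure_rate_def hazard_def tail_def)

lemma hazard_divide: "c \<noteq> 0 \<Longrightarrow> hazard (\<lambda>x. g x / c) = hazard g"
  by (simp add: fun_eq_iff hazard_def tail_def)

lemma
  assumes "set_integrable lborel {0..} g" "0 \<le> x"
  shows set_integrable_atLeast: "set_integrable lborel {x..} g"
    and integrable_on_atLeast: "g integrable_on {x..}"
    and tail_eq_integral: "tail g x = integral {x..} g"
proof -
  show *: "set_integrable lborel {x..} g"
    by (rule set_integrable_subset[OF assms(1)]) (use assms in auto)
  show "g integrable_on {x..}" "tail g x = integral {x..} g"
    using set_borel_integral_eq_integral[OF *] by (auto simp: tail_def)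
qed

lemma integrable_on_Icc_if_atLeast:
  fixes g :: "real \<Rightarrow> real"
  assumes "set_integrable lborel {0..} g" "0 \<le> x"
  shows "g integrable_on {x..y}"
proof -
  have "set_integrable lborel {x..y} g"
    by (rule set_integrable_subset[OF assms(1)]) (use assms in auto)
  then show ?thesis
    using set_borel_integral_eq_integral(1) by blast
qed

lemma tail_split:
  assumes g: "set_integrable lborel {0..} g" and "0 \<le> x" "x \<le> y"
  shows "tail g x = integral {x..y} g + tail g y"
proof -
  have "(g has_integral (integral {x..y} g + integral {y..} g)) ({x..y} \<union> {y..})"
    using assms by (intro has_integral_Un integrable_integral integrable_on_Icc_if_atLeast
        integrable_on_atLeast) auto
  moreover have "{x..y} \<union> {y..} = {x..}"
    using assms by auto
  ultimately show ?thesis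
    using assms by (simp add: integral_unique tail_eq_integral[OF g])
qed

lemma tail_nonneg: "(\<And>x. 0 \<le> g x) \<Longrightarrow> 0 \<le> tail g x"
  unfolding tail_def set_lebesgue_integral_def by (intro integral_nonneg_AE) auto

lemma tail_antimono:
  assumes "set_integrable lborel {0..} g" "\<And>x. 0 \<le> g x" "0 \<le> x" "x \<le> y"
  shows "tail g y \<le> tail g x"
  using tail_split[OF assms(1,3,4)] integral_nonneg[OF integrable_on_Icc_if_atLeast[OF assms(1,3)]]
    assms(2) by force

lemma
  assumes g: "set_integrable lborel {0..} g" and "0 \<le> x"
  shows tail_eq_shifted_integral: "tail g x = (LBINT u:{0..}. g (x + u))"
    and set_integrable_shifted: "set_integrable lborel {0..} (\<lambda>u. g (x + u))"
proof -
  have ind: "indicator {x..} (x + u) = (indicator {0..} u :: real)" for u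
    by (simp add: indicator_def)
  have "integrable lborel (\<lambda>t. indicator {x..} t *\<^sub>R g t)"
    using set_integrable_atLeast[OF assms] by (simp add: set_integrable_def)
  from lborel_integrable_real_affine[OF this, of 1 x]
  show "set_integrable lborel {0..} (\<lambda>u. g (x + u))"
    by (simp add: set_integrable_def ind)
  show "tail g x = (LBINT u:{0..}. g (x + u))"
    unfolding tail_def set_lebesgue_integral_def
    using lborel_integral_real_affine[of 1 "\<lambda>t. indicator {x..} t *\<^sub>R g t" x]
    by (simp add: ind)
qed

lemma tail_has_real_derivative:
  assumes g: "set_integrable lborel {0..} g" and cont: "continuous_on {0<..} g" and "0 < x"
  shows "(tail g has_real_derivative - g x) (at x)"
proof -
  define a where "a = x / 2"
  have a: "0 < a" "a < x"
    using \<open>0 < x\<close> by (auto simp: a_def)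
  have "continuous_on {a..x+1} g"
    by (rule continuous_on_subset[OF cont]) (use a in auto)
  then have "((\<lambda>y. integral {a..y} g) has_real_derivative g x) (at x within {a..x+1})"
    by (rule integral_has_real_derivative) (use a in auto)
  then have "((\<lambda>y. tail g a - integral {a..y} g) has_real_derivative - g x) (at x)"
    using at_within_Icc_at[of a x "x+1"] a by (auto intro!: derivative_eq_intros)
  then show ?thesis
  proof (rule has_field_derivative_transform_within_open[of _ _ _ "{a<..}"])
    show "tail g a - integral {a..y} g = tail g y" if "y \<in> {a<..}" for y
      using tail_split[OF g, of a y] a that by auto
  qed (use a in auto)
qed

lemma continuous_on_tail:
  assumes g: "set_integrable lborel {0..} g" and "0 \<le> a"
  shows "continuous_on {a..b} (tail g)"
proof -
  have "continuous_on {0..b} (\<lambda>y. integral {0..y} g)"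
    by (rule indefinite_integral_continuous_1[OF integrable_on_Icc_if_atLeast[OF g]]) simp
  then have "continuous_on {a..b} (\<lambda>y. tail g 0 - integral {0..y} g)"
    using \<open>0 \<le> a\<close> by (auto intro!: continuous_intros elim: continuous_on_subset)
  then show ?thesis
  proof (rule continuous_on_cong[THEN iffD1, rotated 2])
    show "tail g 0 - integral {0..y} g = tail g y" if "y \<in> {a..b}" for y
      using tail_split[OF g, of 0 y] assms that by auto
  qed simp
qed

lemma set_integrable_if_nonneg_integrable_on:
  fixes f :: "real \<Rightarrow> real"
  assumes "f integrable_on S" "\<And>x. x \<in> S \<Longrightarrow> 0 \<le> f x"
    and "(\<lambda>x. indicator S x *\<^sub>R f x) \<in> borel_measurable borel"
  shows "set_integrable lborel S f"
proof -
  have "f absolutely_integrable_on S"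
    by (rule nonnegative_absolutely_integrable_1) (use assms in auto)
  then show ?thesis
    unfolding set_integrable_def using assms(3) by (subst (asm) integrable_completion) auto
qed

lemma set_integrable_exp_minus:
  fixes b c K :: real
  assumes "0 < b"
  shows "set_integrable lborel {c..} (\<lambda>x. K * exp (- b * x))"
proof -
  have "set_integrable lborel {c..} (\<lambda>x. exp (- b * x))"
    by (rule set_integrable_if_nonneg_integrable_on[OF integrable_on_exp_minus_to_infinity[OF assms]])
       (auto intro!: borel_measurable_continuous_on_indicator continuous_intros)
  then show ?thesis
    by (rule set_integrable_mult_right)
qed

(* The exponential bound is what makes the tail of such a density integrable again. *)
definition exp_bounded_density :: "(real \<Rightarrow> real) \<Rightarrow> bool" where
  "exp_bounded_density g \<longleftrightarrow>
     (\<forall>x. 0 \<le> g x) \<and> (\<forall>x>0. 0 < g x) \<and> continuous_on {0<..} g \<and>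
     set_integrable lborel {0..} g \<and> (\<exists>b>0. \<exists>K. \<forall>\<^sub>F x in at_top. g x \<le> K * exp (- b * x))"

lemma
  assumes "exp_bounded_density g"
  shows exp_bounded_density_nonneg: "0 \<le> g x"
    and exp_bounded_density_pos: "0 < x \<Longrightarrow> 0 < g x"
    and exp_bounded_density_continuous: "continuous_on {0<..} g"
    and exp_bounded_density_integrable: "set_integrable lborel {0..} g"
    and exp_bounded_density_exp_bound: "\<exists>b>0. \<exists>K. \<forall>\<^sub>F x in at_top. g x \<le> K * exp (- b * x)"
  using assms by (auto simp: exp_bounded_density_def)

lemma exp_bounded_density_divide:
  assumes g: "exp_bounded_density g" and "0 < c"
  shows "exp_bounded_density (\<lambda>x. g x / c)"
proof -
  obtain b K where "0 < b" and bound: "\<forall>\<^sub>F x in at_top. g x \<le> K * exp (- b * x)"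
    using exp_bounded_density_exp_bound[OF g] by blast
  from bound have "\<forall>\<^sub>F x in at_top. g x / c \<le> K / c * exp (- b * x)"
    by eventually_elim (use \<open>0 < c\<close> in \<open>simp add: divide_right_mono\<close>)
  moreover have "set_integrable lborel {0..} (\<lambda>x. g x / c)"
    using set_integrable_mult_left[OF exp_bounded_density_integrable[OF g], of "1 / c"] by simp
  moreover have "continuous_on {0<..} (\<lambda>x. g x / c)"
    using exp_bounded_density_continuous[OF g] \<open>0 < c\<close> by (intro continuous_intros) auto
  moreover have "\<forall>x. 0 \<le> g x / c" "\<forall>x>0. 0 < g x / c"
    using exp_bounded_density_nonneg[OF g] exp_bounded_density_pos[OF g] \<open>0 < c\<close> by auto
  ultimately show ?thesis
    unfolding exp_bounded_density_def using \<open>0 < b\<close> by blast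
qed

lemma tail_pos:
  assumes g: "exp_bounded_density g" and "0 \<le> x"
  shows "0 < tail g x"
proof -
  note integrable = exp_bounded_density_integrable[OF g]
  have "continuous_on {x+1..x+2} g"
    by (rule continuous_on_subset[OF exp_bounded_density_continuous[OF g]]) (use assms in auto)
  then obtain z where z: "z \<in> {x+1..x+2}" and min: "\<And>y. y \<in> {x+1..x+2} \<Longrightarrow> g z \<le> g y"
    using continuous_attains_inf[OF compact_Icc _ \<open>continuous_on {x+1..x+2} g\<close>] by auto
  have "0 < integral {x+1..x+2} (\<lambda>_. g z)"
    using z assms exp_bounded_density_pos[OF g, of z] by simp
  also have "\<dots> \<le> integral {x+1..x+2} g"
    using assms min by (intro integral_le integrable_on_Icc_if_atLeast[OF integrable]) auto
  also have "\<dots> \<le> integral {x..} g"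
    using assms exp_bounded_density_nonneg[OF g]
    by (intro integral_subset_le integrable_on_Icc_if_atLeast[OF integrable]
        integrable_on_atLeast[OF integrable]) auto
  finally show ?thesis
    using tail_eq_integral[OF integrable \<open>0 \<le> x\<close>] by simp
qed

lemma tail_le_exp:
  assumes g: "set_integrable lborel {0..} g" and "0 < b" "0 \<le> N" "N \<le> x"
    and bound: "\<And>y. N \<le> y \<Longrightarrow> g y \<le> K * exp (- b * y)"
  shows "tail g x \<le> K / b * exp (- b * x)"
proof -
  have exp_integral: "((\<lambda>t. K * exp (- b * t)) has_integral K * (exp (- b * x) / b)) {x..}"
    using has_integral_mult_right[OF has_integral_exp_minus_to_infinity[OF \<open>0 < b\<close>]] .
  have "tail g x = integral {x..} g"
    using tail_eq_integral[OF g] assms by simp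
  also have "\<dots> \<le> integral {x..} (\<lambda>t. K * exp (- b * t))"
    using assms by (intro integral_le integrable_on_atLeast[OF g] has_integral_integrable[OF exp_integral]) auto
  also have "\<dots> = K / b * exp (- b * x)"
    using integral_unique[OF exp_integral] by simp
  finally show ?thesis .
qed

lemma set_integrable_tail:
  assumes g: "set_integrable lborel {0..} g" and nonneg: "\<And>x. 0 \<le> g x"
    and "0 < b" "0 \<le> N" and bound: "\<And>x. N \<le> x \<Longrightarrow> g x \<le> K * exp (- b * x)"
  shows "set_integrable lborel {0..} (tail g)"
proof -
  define B where "B = max (tail g 0 * exp (b * N)) (K / b)"
  have tail_bound: "tail g x \<le> B * exp (- b * x)" if "0 \<le> x" for x
  proof (cases "x \<le> N")
    case True
    have "1 \<le> exp (b * N) * exp (- b * x)"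
      using True \<open>0 < b\<close> by (simp add: exp_add[symmetric])
    from mult_left_mono[OF this tail_nonneg[OF nonneg]]
    have "tail g 0 \<le> tail g 0 * (exp (b * N) * exp (- b * x))"
      by simp
    then have "tail g x \<le> tail g 0 * exp (b * N) * exp (- b * x)"
      using tail_antimono[OF g nonneg order_refl that] by (simp add: mult.assoc)
    then show ?thesis
      by (rule order_trans) (simp add: B_def)
  next
    case False
    then have "tail g x \<le> K / b * exp (- b * x)"
      using assms by (intro tail_le_exp) auto
    also have "\<dots> \<le> B * exp (- b * x)"
      unfolding B_def by (intro mult_right_mono) auto
    finally show ?thesis .
  qed
  have "mono (\<lambda>x. - tail g (max x 0))"
    by (rule monoI) (auto intro!: tail_antimono[OF g nonneg])
  then have "(\<lambda>x. - (- tail g (max x 0))) \<in> borel_measurable borel"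
    by (intro borel_measurable_uminus borel_measurable_mono)
  then have "(\<lambda>x. indicator {0..} x *\<^sub>R tail g (max x 0)) \<in> borel_measurable borel"
    by simp
  also have "(\<lambda>x. indicator {0..} x *\<^sub>R tail g (max x 0)) = (\<lambda>x. indicator {0..} x *\<^sub>R tail g x)"
    by (auto simp: indicator_def)
  finally have "set_borel_measurable lborel {0..} (tail g)"
    by (simp add: set_borel_measurable_def)
  then show ?thesis
    by (rule set_integrable_bound[OF set_integrable_exp_minus[OF \<open>0 < b\<close>, of 0 B]])
       (use tail_bound tail_nonneg[OF nonneg] in \<open>auto intro!: AE_I2 order_trans[OF _ abs_ge_self]\<close>)
qed

lemma exp_bounded_density_tail:
  assumes g: "exp_bounded_density g"
  shows "exp_bounded_density (tail g)"
proof -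
  note integrable = exp_bounded_density_integrable[OF g]
  have nonneg: "\<And>x. 0 \<le> g x"
    by (rule exp_bounded_density_nonneg[OF g])
  obtain b K where "0 < b" and "\<forall>\<^sub>F x in at_top. g x \<le> K * exp (- b * x)"
    using exp_bounded_density_exp_bound[OF g] by blast
  then obtain N0 where bound0: "\<And>x. N0 \<le> x \<Longrightarrow> g x \<le> K * exp (- b * x)"
    unfolding eventually_at_top_linorder by blast
  define N where "N = max N0 0"
  have "0 \<le> N" and bound: "\<And>x. N \<le> x \<Longrightarrow> g x \<le> K * exp (- b * x)"
    using bound0 by (auto simp: N_def)
  have "continuous_on {0<..} (tail g)"
    using integrable exp_bounded_density_continuous[OF g]
    by (intro continuous_at_imp_continuous_on) (auto intro: DERIV_isCont tail_has_real_derivative)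
  moreover have "\<forall>\<^sub>F x in at_top. tail g x \<le> K / b * exp (- b * x)"
    unfolding eventually_at_top_linorder using integrable \<open>0 < b\<close> \<open>0 \<le> N\<close> bound
    by (intro exI[of _ N] allI impI tail_le_exp) auto
  moreover have "set_integrable lborel {0..} (tail g)"
    using integrable nonneg \<open>0 < b\<close> \<open>0 \<le> N\<close> bound by (rule set_integrable_tail)
  moreover have "\<forall>x. 0 \<le> tail g x" "\<forall>x>0. 0 < tail g x"
    using tail_nonneg[OF nonneg] tail_pos[OF g] by auto
  ultimately show ?thesis
    unfolding exp_bounded_density_def using \<open>0 < b\<close> by blast
qed

lemma divide_le_divide_if_mult_le:
  fixes a b d :: real
  assumes "0 < a" "0 < b" "d * a \<le> d * b"
  shows "d / b \<le> d / a"
proof -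
  have "d / b - d / a = (d * a - d * b) / (a * b)"
    using assms by (simp add: field_simps)
  also have "\<dots> \<le> 0"
    using assms by (intro divide_nonpos_pos) auto
  finally show ?thesis by simp
qed

lemma hazard_mono_if_shift_ratio_antimono:
  assumes g: "exp_bounded_density g" and "S \<subseteq> {0..}" and pos: "\<And>x. x \<in> S \<Longrightarrow> 0 < g x"
    and ratio: "\<And>t. 0 \<le> t \<Longrightarrow> antimono_on S (\<lambda>x. d * (g (x + t) / g x))"
  shows "mono_on S (\<lambda>x. d * hazard g x)"
proof (rule mono_onI)
  fix x y assume xy: "x \<in> S" "y \<in> S" "x \<le> y"
  then have "0 \<le> x" "0 \<le> y"
    using \<open>S \<subseteq> {0..}\<close> by auto
  note integrable = exp_bounded_density_integrable[OF g]
  have mean_residual: "d * (tail g z / g z) = (LBINT u:{0..}. d / g z * g (z + u))" if "0 \<le> z" for z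
    using tail_eq_shifted_integral[OF integrable that] by simp
  have "d / g y * g (y + u) \<le> d / g x * g (x + u)" if "u \<in> {0..}" for u
    using monotone_onD[OF ratio xy] that by simp
  then have "(LBINT u:{0..}. d / g y * g (y + u)) \<le> (LBINT u:{0..}. d / g x * g (x + u))"
    using set_integrable_shifted[OF integrable] \<open>0 \<le> x\<close> \<open>0 \<le> y\<close>
    by (intro set_integral_mono set_integrable_mult_right) auto
  then have "d * (tail g y / g y) \<le> d * (tail g x / g x)"
    using mean_residual[OF \<open>0 \<le> x\<close>] mean_residual[OF \<open>0 \<le> y\<close>] by linarith
  moreover have "0 < tail g x / g x" "0 < tail g y / g y"
    using pos xy tail_pos[OF g] \<open>0 \<le> x\<close> \<open>0 \<le> y\<close> by auto
  ultimately have "d / (tail g x / g x) \<le> d / (tail g y / g y)"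
    by (intro divide_le_divide_if_mult_le)
  then show "d * hazard g x \<le> d * hazard g y"
    by (simp add: hazard_def)
qed

lemma tail_shift_ratio_antimono:
  assumes g: "exp_bounded_density g" and hazard_mono: "mono_on {0<..} (\<lambda>x. d * hazard g x)"
    and "0 \<le> t"
  shows "antimono_on {0..} (\<lambda>x. d * (tail g (x + t) / tail g x))"
proof (rule monotone_onI)
  fix x y :: real assume "x \<in> {0..}" "y \<in> {0..}" "x \<le> y"
  note integrable = exp_bounded_density_integrable[OF g]
  note tail_deriv = tail_has_real_derivative[OF integrable exp_bounded_density_continuous[OF g]]
  have tail_pos_from_x: "0 < tail g z" "0 < tail g (z + t)" if "x \<le> z" for z
    using tail_pos[OF g] that \<open>x \<in> {0..}\<close> \<open>0 \<le> t\<close> by auto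
  show "d * (tail g (y + t) / tail g y) \<le> d * (tail g (x + t) / tail g x)"
  proof (rule DERIV_nonpos_imp_decreasing_open[of x y "\<lambda>z. d * (tail g (z + t) / tail g z)"])
    show "x \<le> y" by fact
  next
    fix z assume "x < z" "z < y"
    then have "0 < z"
      using \<open>x \<in> {0..}\<close> by auto
    have "((\<lambda>z. tail g (z + t)) has_real_derivative - g (z + t)) (at z)"
      using tail_deriv[of "z + t"] \<open>0 < z\<close> \<open>0 \<le> t\<close> by (simp add: DERIV_shift)
    then have "((\<lambda>z. d * (tail g (z + t) / tail g z)) has_real_derivative
        d * ((- g (z + t) * tail g z - tail g (z + t) * - g z) / (tail g z * tail g z))) (at z)"
      using tail_pos_from_x[of z] \<open>x < z\<close> \<open>0 < z\<close>
      by (intro DERIV_cmult DERIV_divide tail_deriv) auto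
    moreover have "d * ((- g (z + t) * tail g z - tail g (z + t) * - g z) / (tail g z * tail g z))
        = (d * hazard g z - d * hazard g (z + t)) * (tail g (z + t) / tail g z)"
      using tail_pos_from_x[of z] \<open>x < z\<close> by (simp add: hazard_def field_simps)
    moreover have "d * hazard g z \<le> d * hazard g (z + t)"
      using mono_onD[OF hazard_mono] \<open>0 < z\<close> \<open>0 \<le> t\<close> by simp
    moreover have "0 \<le> tail g (z + t) / tail g z"
      using tail_pos_from_x[of z] \<open>x < z\<close> by simp
    ultimately show "\<exists>D. ((\<lambda>z. d * (tail g (z + t) / tail g z)) has_real_derivative D) (at z) \<and> D \<le> 0"
      by (metis diff_le_0_iff_le mult_nonpos_nonneg)
  next
    have "continuous_on {x..y} (tail g)"
      using \<open>x \<in> {0..}\<close> by (intro continuous_on_tail[OF integrable]) auto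
    moreover have "continuous_on {x..y} (\<lambda>z. tail g (z + t))"
    proof (rule continuous_on_compose2[of "{x+t..y+t}" "tail g" "{x..y}" "\<lambda>z. z + t"])
      show "continuous_on {x+t..y+t} (tail g)"
        using \<open>x \<in> {0..}\<close> \<open>0 \<le> t\<close> by (intro continuous_on_tail[OF integrable]) auto
    qed (auto intro: continuous_intros)
    ultimately show "continuous_on {x..y} (\<lambda>z. d * (tail g (z + t) / tail g z))"
      using tail_pos_from_x by (intro continuous_intros) (auto simp: less_imp_neq[symmetric])
  qed
qed

lemma hazard_mono_tail:
  assumes g: "exp_bounded_density g" and "mono_on {0<..} (\<lambda>x. d * hazard g x)"
  shows "mono_on {0..} (\<lambda>x. d * hazard (tail g) x)"
  using exp_bounded_density_tail[OF g] _ tail_pos[OF g] tail_shift_ratio_antimono[OF assms]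
  by (rule hazard_mono_if_shift_ratio_antimono) auto

lemma hazard_mono_atLeast_if_zero:
  assumes g: "exp_bounded_density g" and "g 0 = 0" and mono: "mono_on {0<..} (hazard g)"
  shows "mono_on {0..} (hazard g)"
proof (rule mono_onI)
  fix x y :: real assume "x \<in> {0..}" "y \<in> {0..}" "x \<le> y"
  have nonneg: "\<And>x. 0 \<le> g x"
    by (rule exp_bounded_density_nonneg[OF g])
  have "0 \<le> hazard g y"
    unfolding hazard_def using nonneg tail_nonneg[OF nonneg] by simp
  then show "hazard g x \<le> hazard g y"
    using mono_onD[OF mono] \<open>g 0 = 0\<close> \<open>x \<in> {0..}\<close> \<open>x \<le> y\<close>
    by (cases "x = 0") (auto simp: hazard_def)
qed

lemma Tbar_Suc_hazard_mono:
  assumes g: "exp_bounded_density (Tbar f s)" and "mono_on {0<..} (\<lambda>x. d * hazard (Tbar f s) x)"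
  shows "exp_bounded_density (Tbar f (Suc s))" and "mono_on {0..} (\<lambda>x. d * hazard (Tbar f (Suc s)) x)"
proof -
  have "0 < tail (Tbar f s) 0"
    using tail_pos[OF g] by simp
  then show "exp_bounded_density (Tbar f (Suc s))" "mono_on {0..} (\<lambda>x. d * hazard (Tbar f (Suc s)) x)"
    unfolding Tbar_Suc_eq_tail
    using exp_bounded_density_divide[OF exp_bounded_density_tail[OF g]] hazard_mono_tail[OF assms]
    by (simp_all add: hazard_divide)
qed

lemma Tbar_hazard_mono:
  assumes "exp_bounded_density f" and "mono_on {0<..} (\<lambda>x. d * hazard f x)"
  shows "exp_bounded_density (Tbar f s) \<and> mono_on {0<..} (\<lambda>x. d * hazard (Tbar f s) x)"
proof (induction s)
  case (Suc s)
  then have "exp_bounded_density (Tbar f (Suc s))" "mono_on {0..} (\<lambda>x. d * hazard (Tbar f (Suc s)) x)"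
    by (blast intro: Tbar_Suc_hazard_mono)+
  moreover have "{0<..} \<subseteq> {0::real..}"
    by auto
  ultimately show ?case
    by (blast intro: mono_on_subset)
qed (use assms in simp)

lemma gamma_density_shift_ratio:
  assumes "0 < \<alpha>" "0 < \<theta>" "0 < x" "0 \<le> t"
  shows "gamma_density \<alpha> \<theta> (x + t) / gamma_density \<alpha> \<theta> x = (1 + t / x) powr (\<alpha> - 1) * exp (- t / \<theta>)"
proof -
  have "Gamma \<alpha> \<noteq> 0"
    using Gamma_real_pos[OF \<open>0 < \<alpha>\<close>] by simp
  moreover have "exp (- (x + t) / \<theta>) = exp (- t / \<theta>) * exp (- x / \<theta>)"
    using assms by (simp add: exp_add[symmetric] field_simps)
  moreover have "(1 + t / x) powr (\<alpha> - 1) = (x + t) powr (\<alpha> - 1) / x powr (\<alpha> - 1)"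
    using assms by (simp add: powr_divide[symmetric] add_divide_distrib)
  ultimately show ?thesis
    using assms by (simp add: gamma_density_def)
qed

lemma gamma_density_shift_ratio_antimono:
  assumes "0 < \<alpha>" "0 < \<theta>" "0 \<le> t"
  shows "antimono_on {0<..}
    (\<lambda>x. (if 1 \<le> \<alpha> then 1 else -1) * (gamma_density \<alpha> \<theta> (x + t) / gamma_density \<alpha> \<theta> x))"
proof (rule monotone_onI)
  fix x y :: real assume "x \<in> {0<..}" "y \<in> {0<..}" "x \<le> y"
  then have "1 + t / y \<le> 1 + t / x" "1 \<le> 1 + t / y"
    using \<open>0 \<le> t\<close> by (auto intro: divide_left_mono)
  moreover have "(1 + t / y) powr (\<alpha> - 1) \<le> (1 + t / x) powr (\<alpha> - 1)" if "1 \<le> \<alpha>"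
    using calculation that by (intro powr_mono2) auto
  moreover have "(1 + t / x) powr (\<alpha> - 1) \<le> (1 + t / y) powr (\<alpha> - 1)" if "\<alpha> < 1"
    using calculation that by (intro powr_mono2') auto
  ultimately show "(if 1 \<le> \<alpha> then 1 else -1) * (gamma_density \<alpha> \<theta> (y + t) / gamma_density \<alpha> \<theta> y)
      \<le> (if 1 \<le> \<alpha> then 1 else -1) * (gamma_density \<alpha> \<theta> (x + t) / gamma_density \<alpha> \<theta> x)"
    using assms \<open>x \<in> {0<..}\<close> \<open>y \<in> {0<..}\<close>
    by (auto simp: gamma_density_shift_ratio mult_right_mono)
qed

lemma set_integrable_gamma_density:
  assumes "0 < \<alpha>" "0 < \<theta>"
  shows "set_integrable lborel {0..} (gamma_density \<alpha> \<theta>)"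
proof -
  define h where "h t = indicator {0..} t * (t powr (\<alpha> - 1) / exp t)" for t :: real
  have "set_integrable lborel {0..} (\<lambda>t::real. t powr (\<alpha> - 1) / exp t)"
    by (rule set_integrable_if_nonneg_integrable_on
        [OF has_integral_integrable[OF Gamma_integral_real[OF \<open>0 < \<alpha>\<close>]]]) auto
  then have "integrable lborel h"
    by (simp add: set_integrable_def h_def[abs_def])
  from lborel_integrable_real_affine[OF this, of "1 / \<theta>" 0]
  have "integrable lborel (\<lambda>x. \<theta> powr (\<alpha> - 1) / (\<theta> powr \<alpha> * Gamma \<alpha>) * h (x / \<theta>))"
    using \<open>0 < \<theta>\<close> by simp
  moreover have "\<theta> powr (\<alpha> - 1) / (\<theta> powr \<alpha> * Gamma \<alpha>) * h (x / \<theta>)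
      = indicator {0..} x *\<^sub>R gamma_density \<alpha> \<theta> x" for x
    using assms
    by (cases x "0 :: real" rule: linorder_cases)
       (auto simp: h_def gamma_density_def indicator_def powr_divide exp_minus field_simps)
  ultimately show ?thesis
    by (simp add: set_integrable_def)
qed

lemma exp_bounded_density_gamma_density:
  assumes "0 < \<alpha>" "0 < \<theta>"
  shows "exp_bounded_density (gamma_density \<alpha> \<theta>)"
proof -
  define C where "C = \<theta> powr \<alpha> * Gamma \<alpha>"
  have "0 < C"
    using assms by (simp add: C_def)
  have "((\<lambda>x::real. x powr (\<alpha> - 1) * exp (- x / (2 * \<theta>))) \<longlongrightarrow> 0) at_top"
    using \<open>0 < \<theta>\<close> by real_asymp
  then have "\<forall>\<^sub>F x in at_top. x powr (\<alpha> - 1) * exp (- x / (2 * \<theta>)) < 1"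
    by (rule order_tendstoD) simp
  moreover note eventually_gt_at_top[of 0]
  ultimately have "\<forall>\<^sub>F x in at_top. gamma_density \<alpha> \<theta> x \<le> 1 / C * exp (- (1 / (2 * \<theta>)) * x)"
  proof eventually_elim
    case (elim x)
    have "exp (- x / \<theta>) = exp (- x / (2 * \<theta>)) * exp (- (1 / (2 * \<theta>)) * x)"
      using \<open>0 < \<theta>\<close> by (simp add: exp_add[symmetric] field_simps)
    then show ?case
      using elim \<open>0 < C\<close> by (simp add: gamma_density_def C_def[symmetric] mult.assoc[symmetric]
          divide_right_mono mult_right_mono less_imp_le)
  qed
  moreover have "continuous_on {0<..} (gamma_density \<alpha> \<theta>)"
  proof (rule continuous_on_cong[THEN iffD1, rotated 2])
    show "continuous_on {0<..} (\<lambda>x::real. x powr (\<alpha> - 1) * exp (- x / \<theta>) / C)"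
      using \<open>0 < C\<close> \<open>0 < \<theta>\<close> by (auto intro!: continuous_intros)
  qed (auto simp: gamma_density_def C_def)
  moreover have "\<forall>x. 0 \<le> gamma_density \<alpha> \<theta> x" "\<forall>x>0. 0 < gamma_density \<alpha> \<theta> x"
    using assms by (auto simp: gamma_density_def)
  moreover have "0 < 1 / (2 * \<theta>)"
    using \<open>0 < \<theta>\<close> by simp
  ultimately show ?thesis
    unfolding exp_bounded_density_def using set_integrable_gamma_density[OF assms] by blast
qed

theorem theorem2:
  fixes \<alpha> \<theta> :: real and s :: nat
  assumes "\<alpha> > 0" and "\<theta> > 0" and "s \<ge> 1"
  shows "(\<alpha> \<ge> 1 \<longrightarrow> s_IFR (gamma_density \<alpha> \<theta>) s)
       \<and> (\<alpha> < 1 \<longrightarrow> s_DFR (gamma_density \<alpha> \<theta>) s)"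
proof -
  let ?f = "gamma_density \<alpha> \<theta>"
  define d :: real where "d = (if 1 \<le> \<alpha> then 1 else -1)"
  have f: "exp_bounded_density ?f"
    using exp_bounded_density_gamma_density assms by blast
  have hazard_f: "mono_on {0<..} (\<lambda>x. d * hazard ?f x)"
    unfolding d_def using f exp_bounded_density_pos[OF f] gamma_density_shift_ratio_antimono assms
    by (intro hazard_mono_if_shift_ratio_antimono) auto
  obtain k where s: "s = Suc k"
    using \<open>s \<ge> 1\<close> by (cases s) auto
  have rate: "iter_failure_rate ?f s = hazard (Tbar ?f k)"
    by (simp add: s iter_failure_rate_eq_hazard)
  (* The IFR claim includes x = 0: for s >= 2 this comes from Tbar_Suc_hazard_mono,
     for s = 1 from the vanishing of the density at 0. *)
  have "mono_on {0..} (hazard (Tbar ?f k))" if "1 \<le> \<alpha>"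
  proof (cases k)
    case 0
    then show ?thesis
      using hazard_mono_atLeast_if_zero[OF f] hazard_f that by (simp add: d_def gamma_density_def)
  next
    case (Suc j)
    have "mono_on {0..} (\<lambda>x. d * hazard (Tbar ?f (Suc j)) x)"
      using Tbar_hazard_mono[OF f hazard_f] by (blast intro: Tbar_Suc_hazard_mono(2))
    then show ?thesis
      using that by (simp add: d_def Suc del: Tbar.simps)
  qed
  moreover have "antimono_on {0<..} (hazard (Tbar ?f k))" if "\<alpha> < 1"
    using conjunct2[OF Tbar_hazard_mono[OF f hazard_f]] that
    by (auto simp: d_def monotone_on_def)
  ultimately show ?thesis
    by (simp add: s_IFR_def s_DFR_def rate)
qed

end
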